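(* Let $G$, $\rho$, $H$, $\{U_i\}_{i\in I}$, $\sigma$, $C$ be as in the context, and let $I_k\subseteq I$ be an orbit of $\sigma$, with a fixed element $0\in I_k$. Suppose we are given a tight compatible encoding scheme for $I_k$ on $C$, i.e. open subsets $\{D^k_i\}_{i\in I_k}$ of $C$ which are pairwise disjoint and cover $C$ up to a set of $\mu_C$-measure zero, such that $h\cdot D^k_i = D^k_{\sigma(i,h^{-1})}$ for all $h\in H$, $i\in I_k$, and set $E^k_i:=D^k_i$ for all $i\in I_k$. For $i\in I_k$ choose $c_i\in H$ with $c_i\cdot E^k_0=E^k_i$. For $x\in C$ lying in $D^k_j$ write $U(x):=U_j$ (defined for $\mu_C$-almost every $x$). For $i\in I_k$ define the channel $$\mathcal T^k_i(\tau):=\frac{1}{\mu_C(E^k_i)}\int_{G\times C} dg\,dx\;\mathbb 1_{E^k_i}(x)\,\big[\rho(g)^\dagger U(g\cdot x)\rho(g)\,U_i^\dagger\big](\tau)$$ on density matrices $\tau$ on $V$ (this is the effective channel, in Alice's frame, of the tight teleportation procedure when Alice obtains measurement result $i$ and sends a uniformly random reading $x\in E^k_i$, Bob receives $g\cdot x$ and applies $U(g\cdot x)$, with $g$ Haar-distributed). Then $$\mathcal T^k_i=\frac{|I_k|}{\mu_C(E^k_0)}\,[\rho(c_i)]\circ\left(\int_G dg\;p(g)\,\big[\rho(g)^\dagger U_0\rho(g)U_0^\dagger\big]\right)\circ[\rho(c_i)^\dagger],$$ where $p(g):=\int_{C}dx\,\mathbb 1_{E^k_0}(x)\,\mathbb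 1_{D^k_0}(g\cdot x)=\mu_C\big(E^k_0\cap g^{-1}\cdot D^k_0\big)$.
   Context: $G$ is a compact Lie group with normalised Haar measure $dg$, and $\rho:G\to U(V)$ is a unitary representation on a Hilbert space $V\cong\mathbb C^d$. For an operator $M$ on $V$, $[M]$ denotes the map $\tau\mapsto M\tau M^\dagger$, and $\circ$ is composition of maps. A unitary error basis (UEB) is a family $\{U_i\}_{i\in I}$, $|I|=d^2$, of unitaries on $V$ with $\frac1d\mathrm{Tr}(U_i^\dagger U_j)=\delta_{ij}$. $H\subseteq G$ is a finite subgroup and $\{U_i\}_{i\in I}$ is $H$-equivariant: there is a right action $\sigma:I\times H\to I$ and phases $\alpha(i,h)\in U(1)$ with $\rho(h)^\dagger U_i\rho(h)=\alpha(i,h)U_{\sigma(i,h)}$ for all $h\in H$, $i\in I$. $C$ is a smooth manifold with a normalised measure $\mu_C$ (written $dx$) carrying a smooth, measure-preserving left action $G\times C\to C$, $(g,x)\mapsto g\cdot x$. $\mathbb 1_S$ denotes the indicator function of a set $S$. *)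

theory Defs
  imports "HOL-Analysis.Analysis" "HOL-Probability.Probability"
begin

text \<open>Operators on V = complex^'n (d = CARD('n)) are matrices complex^'n^'n.\<close>

definition cadj :: "complex^'n^'n \<Rightarrow> complex^'n^'n" where
  "cadj A = (\<chi> i j. cnj (A $ j $ i))"

definition cscale :: "complex \<Rightarrow> complex^'n^'n \<Rightarrow> complex^'n^'n" where
  "cscale c A = (\<chi> i j. c * A $ i $ j)"

definition unitary_mat :: "complex^'n^'n \<Rightarrow> bool" where
  "unitary_mat A \<longleftrightarrow> cadj A ** A = mat 1 \<and> A ** cadj A = mat 1"

definition conj_map :: "complex^'n^'n \<Rightarrow> complex^'n^'n \<Rightarrow> complex^'n^'n" where
  "conj_map M \<tau> = M ** \<tau> ** cadj M"

text \<open>Compact (Hausdorff, second countable) topological group with multiplication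
  gmul, unit gone, inverse ginv, and MG its normalised Haar measure (Borel probability
  measure, left and right invariant; for compact groups the Haar measure is bi-invariant).\<close>
definition compact_group_haar ::
  "('g::{t2_space,second_countable_topology} \<Rightarrow> 'g \<Rightarrow> 'g) \<Rightarrow> 'g \<Rightarrow> ('g \<Rightarrow> 'g) \<Rightarrow> 'g measure \<Rightarrow> bool" where
  "compact_group_haar gmul gone ginv MG \<longleftrightarrow>
     group gmul gone ginv \<and>
     compact (UNIV :: 'g set) \<and>
     continuous_on UNIV (\<lambda>(a,b). gmul a b) \<and> continuous_on UNIV ginv \<and>
     prob_space MG \<and> sets MG = sets borel \<and>
     (\<forall>g. (\<lambda>h. gmul g h) \<in> measurable MG MG \<and> distr MG MG (\<lambda>h. gmul g h) = MG) \<and>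
     (\<forall>g. (\<lambda>h. gmul h g) \<in> measurable MG MG \<and> distr MG MG (\<lambda>h. gmul h g) = MG)"

definition unitary_rep ::
  "('g::topological_space \<Rightarrow> 'g \<Rightarrow> 'g) \<Rightarrow> ('g \<Rightarrow> complex^'n^'n) \<Rightarrow> bool" where
  "unitary_rep gmul \<rho> \<longleftrightarrow>
     (\<forall>g. unitary_mat (\<rho> g)) \<and> (\<forall>g h. \<rho> (gmul g h) = \<rho> g ** \<rho> h) \<and>
     continuous_on UNIV \<rho>"

text \<open>Unitary error basis indexed by the finite type 'i (I = UNIV).\<close>
definition UEB :: "('i::finite \<Rightarrow> complex^'n^'n) \<Rightarrow> bool" where
  "UEB U \<longleftrightarrow> CARD('i) = CARD('n)^2 \<and> (\<forall>i. unitary_mat (U i)) \<and>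
     (\<forall>i j. trace (cadj (U i) ** U j) / of_nat CARD('n) = (if i = j then 1 else 0))"

definition finite_subgroup :: "('g \<Rightarrow> 'g \<Rightarrow> 'g) \<Rightarrow> 'g \<Rightarrow> ('g \<Rightarrow> 'g) \<Rightarrow> 'g set \<Rightarrow> bool" where
  "finite_subgroup gmul gone ginv H \<longleftrightarrow> finite H \<and> gone \<in> H \<and>
     (\<forall>a\<in>H. \<forall>b\<in>H. gmul a b \<in> H) \<and> (\<forall>a\<in>H. ginv a \<in> H)"

definition H_equivariant ::
  "('g \<Rightarrow> 'g \<Rightarrow> 'g) \<Rightarrow> 'g \<Rightarrow> ('g \<Rightarrow> complex^'n^'n) \<Rightarrow> 'g set \<Rightarrow>
   ('i \<Rightarrow> complex^'n^'n) \<Rightarrow> ('i \<Rightarrow> 'g \<Rightarrow> 'i) \<Rightarrow> ('i \<Rightarrow> 'g \<Rightarrow> complex) \<Rightarrow> bool" where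
  "H_equivariant gmul gone \<rho> H U \<sigma> \<alpha> \<longleftrightarrow>
     (\<forall>i. \<sigma> i gone = i) \<and>
     (\<forall>i. \<forall>h\<in>H. \<forall>h'\<in>H. \<sigma> (\<sigma> i h) h' = \<sigma> i (gmul h h')) \<and>
     (\<forall>i. \<forall>h\<in>H. cmod (\<alpha> i h) = 1) \<and>
     (\<forall>i. \<forall>h\<in>H. cadj (\<rho> h) ** U i ** \<rho> h = cscale (\<alpha> i h) (U (\<sigma> i h)))"

definition mp_left_action ::
  "('g::topological_space \<Rightarrow> 'g \<Rightarrow> 'g) \<Rightarrow> 'g \<Rightarrow> ('g \<Rightarrow> 'c::topological_space \<Rightarrow> 'c) \<Rightarrow> 'c measure \<Rightarrow> bool" where
  "mp_left_action gmul gone act MC \<longleftrightarrow>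
     prob_space MC \<and> sets MC = sets borel \<and>
     (\<forall>x. act gone x = x) \<and> (\<forall>g h x. act (gmul g h) x = act g (act h x)) \<and>
     continuous_on UNIV (\<lambda>(g,x). act g x) \<and>
     (\<forall>g. act g \<in> measurable MC MC \<and> distr MC MC (act g) = MC)"

definition tight_compatible_encoding ::
  "('g \<Rightarrow> 'g) \<Rightarrow> ('g \<Rightarrow> 'c::topological_space \<Rightarrow> 'c) \<Rightarrow> 'c measure \<Rightarrow> 'g set \<Rightarrow>
   ('i \<Rightarrow> 'g \<Rightarrow> 'i) \<Rightarrow> 'i set \<Rightarrow> ('i \<Rightarrow> 'c set) \<Rightarrow> bool" where
  "tight_compatible_encoding ginv act MC H \<sigma> Ik D \<longleftrightarrow>
     (\<forall>i\<in>Ik. open (D i)) \<and> disjoint_family_on D Ik \<and>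
     (UNIV - (\<Union>i\<in>Ik. D i)) \<in> null_sets MC \<and>
     (\<forall>h\<in>H. \<forall>i\<in>Ik. act h ` D i = D (\<sigma> i (ginv h)))"

text \<open>U(x) := U_j for x in D_j (j in Ik); off the union of the D_j (a null set) it is 0.\<close>
definition Ufun :: "('i \<Rightarrow> complex^'n^'n) \<Rightarrow> 'i set \<Rightarrow> ('i \<Rightarrow> 'c set) \<Rightarrow> 'c \<Rightarrow> complex^'n^'n" where
  "Ufun U Ik D x = (\<Sum>j\<in>Ik. indicator (D j) x *\<^sub>R U j)"

end

theory Submission
  imports Defs
begin

text \<open>Expanding \<open>U(g\<cdot>x)\<close> over the regions \<open>D\<^sub>j\<close> splits the channel into \<open>|I\<^sub>k|\<close> terms.
  Every \<open>j \<in> I\<^sub>k\<close> is \<open>\<sigma>(0, h\<^sup>-\<^sup>1)\<close> for some \<open>h \<in> H\<close>, so that \<open>D\<^sub>j = h\<cdot>D\<^sub>0\<close> and, up to a phase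
  that the conjugation \<open>[\<cdot>]\<close> kills, \<open>U\<^sub>j = \<rho>(h) U\<^sub>0 \<rho>(h)\<^sup>\<dagger>\<close>; likewise \<open>D\<^sub>i = c\<cdot>D\<^sub>0\<close> and
  \<open>U\<^sub>i \<sim> \<rho>(c) U\<^sub>0 \<rho>(c)\<^sup>\<dagger>\<close>. Substituting \<open>x \<mapsto> c\<cdot>x\<close> on \<open>C\<close> and \<open>g \<mapsto> h\<^sup>-\<^sup>1 g c\<close> on \<open>G\<close>, both
  measure preserving, turns each term into the same integral
  \<open>\<integral> p(g) [\<rho>(c) \<rho>(g)\<^sup>\<dagger> U\<^sub>0 \<rho>(g) U\<^sub>0\<^sup>\<dagger> \<rho>(c)\<^sup>\<dagger>] dg\<close>, and \<open>\<mu>\<^sub>C(D\<^sub>i) = \<mu>\<^sub>C(D\<^sub>0)\<close>.\<close>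

subsection \<open>Matrix algebra\<close>

lemma cadj_mult: "cadj (A ** B) = cadj B ** cadj (A::complex^'n^'n)"
  by (simp add: cadj_def matrix_matrix_mult_def vec_eq_iff mult.commute)

lemma cadj_cadj [simp]: "cadj (cadj A) = A"
  by (simp add: cadj_def vec_eq_iff)

lemma cadj_mat_1 [simp]: "cadj (mat 1 :: complex^'n^'n) = mat 1"
  by (simp add: cadj_def mat_def vec_eq_iff)

lemma cadj_cscale: "cadj (cscale a A) = cscale (cnj a) (cadj A)"
  by (simp add: cadj_def cscale_def vec_eq_iff)

lemma cscale_mult_left: "cscale a A ** B = cscale a (A ** (B::complex^'n^'n))"
  by (simp add: cscale_def matrix_matrix_mult_def vec_eq_iff sum_distrib_left mult.assoc)

lemma cscale_mult_right: "A ** cscale a B = cscale a (A ** (B::complex^'n^'n))"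
  by (simp add: cscale_def matrix_matrix_mult_def vec_eq_iff sum_distrib_left mult_ac)

lemma cscale_cscale: "cscale a (cscale b A) = cscale (a * b) A"
  by (simp add: cscale_def vec_eq_iff mult.assoc)

lemma cscale_one [simp]: "cscale 1 A = A"
  by (simp add: cscale_def vec_eq_iff)

lemma cnj_mult_self_unit: "cmod a = 1 \<Longrightarrow> cnj a * a = 1"
  by (metis complex_norm_square mult.commute of_real_1 power_one)

lemma conj_map_cscale:
  assumes "cmod a = 1"
  shows "conj_map (cscale a A) \<tau> = conj_map A (\<tau>::complex^'n^'n)"
  using cnj_mult_self_unit[OF assms]
  by (simp add: conj_map_def cadj_cscale cscale_mult_left cscale_mult_right cscale_cscale
      mult.commute)

lemma conj_map_mult: "conj_map A (conj_map B \<tau>) = conj_map (A ** B) (\<tau>::complex^'n^'n)"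
  by (simp add: conj_map_def cadj_mult matrix_mul_assoc)

lemma conj_map_mat_1 [simp]: "conj_map (mat 1) (\<tau>::complex^'n^'n) = \<tau>"
  by (simp add: conj_map_def)

lemma matrix_add_rdistrib: "(B + C) ** A = B ** A + C ** (A::complex^'n^'n)"
  by (vector matrix_matrix_mult_def sum.distrib[symmetric] field_simps)

lemma matrix_scaleR_left: "(r *\<^sub>R A) ** B = r *\<^sub>R (A ** (B::complex^'n^'n))"
  by (simp add: matrix_matrix_mult_def vec_eq_iff scaleR_sum_right)

lemma matrix_scaleR_right: "A ** (r *\<^sub>R B) = r *\<^sub>R (A ** (B::complex^'n^'n))"
  by (simp add: matrix_matrix_mult_def vec_eq_iff scaleR_sum_right)

lemma bounded_linear_conj_map: "bounded_linear (conj_map (M::complex^'n^'n))"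
  unfolding linear_conv_bounded_linear[symmetric]
  by (rule linearI) (simp_all add: conj_map_def matrix_add_ldistrib matrix_add_rdistrib
      matrix_scaleR_left matrix_scaleR_right)

lemma continuous_on_matrix_mult:
  "continuous_on S f \<Longrightarrow> continuous_on S g \<Longrightarrow> continuous_on S (\<lambda>x. f x ** (g x::complex^'n^'n))"
  by (rule bounded_bilinear.continuous_on[of "(**)"])
    (auto simp: bilinear_conv_bounded_bilinear[symmetric] bilinear_def
      intro!: linearI simp: matrix_add_ldistrib matrix_add_rdistrib
      matrix_scaleR_left matrix_scaleR_right)

lemma continuous_on_cadj:
  "continuous_on S f \<Longrightarrow> continuous_on S (\<lambda>x. cadj (f x::complex^'n^'n))"
  by (rule bounded_linear.continuous_on[of cadj])
    (auto simp: linear_conv_bounded_linear[symmetric] cadj_def vec_eq_iff intro!: linearI)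

lemma continuous_on_conj_map:
  "continuous_on S f \<Longrightarrow> continuous_on S (\<lambda>x. conj_map (f x) (\<tau>::complex^'n^'n))"
  unfolding conj_map_def by (intro continuous_on_matrix_mult continuous_on_cadj continuous_on_const)

lemma conj_map_integral_unitary:
  fixes f :: "'a \<Rightarrow> real"
  assumes "unitary_mat V"
  shows "conj_map V (\<integral>g. f g *\<^sub>R conj_map (X g) (conj_map (cadj V) \<tau>) \<partial>M)
       = (\<integral>g. f g *\<^sub>R conj_map (V ** X g ** cadj V) \<tau> \<partial>M)"
proof -
  have unit: "V ** cadj V = mat 1" "cadj V ** V = mat 1"
    using assms by (simp_all add: unitary_mat_def)
  have "conj_map V (\<integral>g. f g *\<^sub>R conj_map (X g) (conj_map (cadj V) \<tau>) \<partial>M)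
      = (\<integral>g. conj_map V (f g *\<^sub>R conj_map (X g) (conj_map (cadj V) \<tau>)) \<partial>M)"
    by (rule integral_bounded_linear'[OF bounded_linear_conj_map
          bounded_linear_conj_map[of "cadj V"], symmetric])
      (simp add: conj_map_mult unit)
  also have "\<dots> = (\<integral>g. f g *\<^sub>R conj_map (V ** X g ** cadj V) \<tau> \<partial>M)"
    by (simp add: linear_cmul[OF bounded_linear.linear[OF bounded_linear_conj_map]]
        conj_map_mult matrix_mul_assoc)
  finally show ?thesis .
qed

subsection \<open>Groups, representations and actions\<close>

lemma unitary_rep_one:
  assumes "group gmul gone ginv" and rep: "unitary_rep gmul \<rho>"
  shows "\<rho> gone = mat 1"
proof -
  interpret group gmul gone ginv by fact
  have unit: "cadj (\<rho> gone) ** \<rho> gone = mat 1"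
    using rep by (simp add: unitary_rep_def unitary_mat_def)
  have "\<rho> gone = \<rho> gone ** \<rho> gone"
    using rep unfolding unitary_rep_def by (metis left_neutral)
  then have "cadj (\<rho> gone) ** \<rho> gone = cadj (\<rho> gone) ** \<rho> gone ** \<rho> gone"
    by (metis matrix_mul_assoc)
  then show ?thesis by (simp add: unit)
qed

lemma unitary_rep_inv:
  assumes grp: "group gmul gone ginv" and rep: "unitary_rep gmul \<rho>"
  shows "\<rho> (ginv g) = cadj (\<rho> g)"
proof -
  interpret group gmul gone ginv by fact
  have unit: "cadj (\<rho> g) ** \<rho> g = mat 1"
    using rep by (simp add: unitary_rep_def unitary_mat_def)
  have "\<rho> (ginv g) = cadj (\<rho> g) ** \<rho> g ** \<rho> (ginv g)" by (simp add: unit)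
  also have "\<dots> = cadj (\<rho> g) ** \<rho> (gmul g (ginv g))"
    using rep unfolding unitary_rep_def by (metis matrix_mul_assoc)
  finally show ?thesis by (simp add: unitary_rep_one[OF grp rep])
qed

lemma H_equivariant_inv:
  assumes grp: "group gmul gone ginv" and rep: "unitary_rep gmul \<rho>"
    and "finite_subgroup gmul gone ginv H" and "H_equivariant gmul gone \<rho> H U \<sigma> \<alpha>"
    and h: "h \<in> H"
  obtains a where "cmod a = 1" and "U (\<sigma> j (ginv h)) = cscale a (\<rho> h ** U j ** cadj (\<rho> h))"
proof
  have h': "ginv h \<in> H" using assms(3) h by (simp add: finite_subgroup_def)
  then have conj: "cadj (\<rho> (ginv h)) ** U j ** \<rho> (ginv h) = cscale (\<alpha> j (ginv h)) (U (\<sigma> j (ginv h)))"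
    and unit: "cmod (\<alpha> j (ginv h)) = 1"
    using assms(4) by (simp_all add: H_equivariant_def)
  then show "cmod (cnj (\<alpha> j (ginv h))) = 1" by simp
  have "\<rho> (ginv (ginv h)) = \<rho> h"
    using grp by (simp add: group.inverse_inverse)
  with conj unit show "U (\<sigma> j (ginv h)) = cscale (cnj (\<alpha> j (ginv h))) (\<rho> h ** U j ** cadj (\<rho> h))"
    by (simp add: unitary_rep_inv[OF grp rep, symmetric] cscale_cscale cnj_mult_self_unit)
qed

lemma orbit_eq_image_inv:
  assumes grp: "group gmul gone ginv" and H: "finite_subgroup gmul gone ginv H"
    and eqv: "H_equivariant gmul gone \<rho> H U \<sigma> \<alpha>"
    and orbit: "Ik = (\<lambda>h. \<sigma> j h) ` H" and i0: "i0 \<in> Ik"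
  shows "Ik = (\<lambda>h. \<sigma> i0 (ginv h)) ` H"
proof -
  interpret group gmul gone ginv by fact
  have Hinv: "\<And>a. a \<in> H \<Longrightarrow> ginv a \<in> H" and Hmul: "\<And>a b. a \<in> H \<Longrightarrow> b \<in> H \<Longrightarrow> gmul a b \<in> H"
    using H by (auto simp: finite_subgroup_def)
  have act: "\<And>k a b. a \<in> H \<Longrightarrow> b \<in> H \<Longrightarrow> \<sigma> (\<sigma> k a) b = \<sigma> k (gmul a b)"
    using eqv by (simp add: H_equivariant_def)
  obtain a where a: "a \<in> H" "i0 = \<sigma> j a" using orbit i0 by blast
  show ?thesis
  proof
    show "Ik \<subseteq> (\<lambda>h. \<sigma> i0 (ginv h)) ` H"
    proof
      fix k assume "k \<in> Ik"
      then obtain b where b: "b \<in> H" "k = \<sigma> j b" using orbit by blast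
      have "k = \<sigma> i0 (ginv (gmul (ginv b) a))"
        using a b by (simp add: act Hinv Hmul inverse_distrib_swap assoc[symmetric])
      then show "k \<in> (\<lambda>h. \<sigma> i0 (ginv h)) ` H" using a b Hinv Hmul by blast
    qed
    show "(\<lambda>h. \<sigma> i0 (ginv h)) ` H \<subseteq> Ik"
      using a orbit by (auto simp: act Hinv Hmul)
  qed
qed

lemma act_inv_act:
  assumes "group gmul gone ginv" and "mp_left_action gmul gone act MC"
  shows "act (ginv h) (act h x) = x" and "act h (act (ginv h) x) = x"
proof -
  interpret group gmul gone ginv by fact
  have one: "act gone x = x" and mul: "\<And>g h. act (gmul g h) x = act g (act h x)"
    using assms(2) by (simp_all add: mp_left_action_def)
  show "act (ginv h) (act h x) = x" using one mul[of "ginv h" h] by simp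
  show "act h (act (ginv h) x) = x" using one mul[of h "ginv h"] by simp
qed

lemma image_act_eq_vimage:
  assumes "group gmul gone ginv" and "mp_left_action gmul gone act MC"
  shows "act h ` S = act (ginv h) -` S"
  using act_inv_act[OF assms] by (auto intro!: image_eqI)

lemma continuous_on_act:
  assumes "mp_left_action gmul gone act MC"
  shows "continuous_on UNIV (act g)"
proof -
  have "continuous_on UNIV ((\<lambda>(g, x). act g x) \<circ> Pair g)"
    using assms by (intro continuous_on_compose continuous_intros)
      (auto simp: mp_left_action_def elim: continuous_on_subset)
  then show ?thesis by (simp add: o_def)
qed

lemma open_image_act:
  assumes "group gmul gone ginv" and "mp_left_action gmul gone act MC" and "open S"
  shows "open (act h ` S)"
  unfolding image_act_eq_vimage[OF assms(1,2)]
  by (rule open_vimage[OF assms(3) continuous_on_act[OF assms(2)]])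

lemma sets_image_act:
  assumes grp: "group gmul gone ginv" and act: "mp_left_action gmul gone act MC"
    and A: "A \<in> sets MC"
  shows "act h ` A \<in> sets MC"
proof -
  have "act (ginv h) \<in> measurable MC MC" and "space MC = UNIV"
    using act by (auto simp: mp_left_action_def dest: sets_eq_imp_space_eq)
  with measurable_sets[OF this(1) A] show ?thesis
    by (simp add: image_act_eq_vimage[OF grp act])
qed

lemma measure_image_act:
  assumes grp: "group gmul gone ginv" and act: "mp_left_action gmul gone act MC"
    and A: "A \<in> sets MC"
  shows "measure MC (act h ` A) = measure MC A"
proof -
  have m: "act h \<in> measurable MC MC" and d: "distr MC MC (act h) = MC"
    and sp: "space MC = UNIV"
    using act by (auto simp: mp_left_action_def dest: sets_eq_imp_space_eq)
  have inj: "inj (act h)" using act_inv_act(1)[OF grp act] by (metis injI)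
  have "act h ` A \<in> sets MC" by (rule sets_image_act[OF grp act A])
  then have "measure MC (act h ` A) = measure MC (act h -` act h ` A)"
    using measure_distr[OF m] d sp by (metis Int_UNIV_right)
  then show ?thesis by (simp add: inj_vimage_image_eq[OF inj])
qed

lemma integral_act_invariant:
  fixes f :: "'c::topological_space \<Rightarrow> 'b::{banach, second_countable_topology}"
  assumes "mp_left_action gmul gone act MC" and "f \<in> borel_measurable MC"
  shows "integral\<^sup>L MC (\<lambda>x. f (act c x)) = integral\<^sup>L MC f"
  using assms integral_distr[of "act c" MC MC f] by (simp add: mp_left_action_def)

lemma integral_haar_translate:
  fixes f :: "'g::{t2_space, second_countable_topology} \<Rightarrow> 'b::{banach, second_countable_topology}"
  assumes G: "compact_group_haar gmul gone ginv MG" and f: "f \<in> borel_measurable MG"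
  shows "integral\<^sup>L MG (\<lambda>g. f (gmul a (gmul g b))) = integral\<^sup>L MG f"
proof -
  have l: "(\<lambda>g. gmul a g) \<in> measurable MG MG" "distr MG MG (\<lambda>g. gmul a g) = MG"
    and r: "(\<lambda>g. gmul g b) \<in> measurable MG MG" "distr MG MG (\<lambda>g. gmul g b) = MG"
    using G by (auto simp: compact_group_haar_def)
  have "integral\<^sup>L MG (\<lambda>g. f (gmul a (gmul g b))) = integral\<^sup>L MG (\<lambda>g. f (gmul a g))"
    using integral_distr[OF r(1) measurable_compose[OF l(1) f]] r(2) by simp
  also have "\<dots> = integral\<^sup>L MG f"
    using integral_distr[OF l(1) f] l(2) by simp
  finally show ?thesis .
qed

lemma tight_compatible_encoding_index:
  assumes enc: "tight_compatible_encoding ginv act MC H \<sigma> Ik D"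
    and "c \<in> H" and "i0 \<in> Ik" and "i \<in> Ik" and "\<sigma> i0 (ginv c) \<in> Ik"
    and "act c ` D i0 = D i" and "D i \<noteq> {}"
  shows "i = \<sigma> i0 (ginv c)"
proof (rule ccontr)
  assume "i \<noteq> \<sigma> i0 (ginv c)"
  then have "D i \<inter> D (\<sigma> i0 (ginv c)) = {}"
    using enc assms(4,5) by (auto simp: tight_compatible_encoding_def disjoint_family_on_def)
  moreover have "D (\<sigma> i0 (ginv c)) = D i"
    using enc assms(2,3,6) by (simp add: tight_compatible_encoding_def)
  ultimately show False using assms(7) by simp
qed

lemma orbit_element_translate:
  assumes grp: "group gmul gone ginv" and rep: "unitary_rep gmul \<rho>"
    and Hsub: "finite_subgroup gmul gone ginv H" and equiv: "H_equivariant gmul gone \<rho> H U \<sigma> \<alpha>"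
    and enc: "tight_compatible_encoding ginv act MC H \<sigma> Ik D"
    and h: "h \<in> H" and "i0 \<in> Ik"
  obtains a where "cmod a = 1" and "D (\<sigma> i0 (ginv h)) = act h ` D i0"
    and "U (\<sigma> i0 (ginv h)) = cscale a (\<rho> h ** U i0 ** cadj (\<rho> h))"
proof -
  have "D (\<sigma> i0 (ginv h)) = act h ` D i0"
    using enc h \<open>i0 \<in> Ik\<close> by (simp add: tight_compatible_encoding_def)
  with H_equivariant_inv[OF grp rep Hsub equiv h] that show ?thesis by metis
qed

lemma map_Ufun:
  fixes Q :: "complex^'n^'n \<Rightarrow> 'b::real_vector"
  assumes "disjoint_family_on D Ik" and "finite Ik" and "Q 0 = 0"
  shows "Q (Ufun U Ik D x) = (\<Sum>j\<in>Ik. indicator (D j) x *\<^sub>R Q (U j))"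
proof (cases "\<exists>j\<in>Ik. x \<in> D j")
  case True
  then obtain j where j: "j \<in> Ik" "x \<in> D j" by blast
  then have "\<And>k. k \<in> Ik - {j} \<Longrightarrow> x \<notin> D k"
    using assms(1) unfolding disjoint_family_on_def by blast
  then have single: "(\<Sum>k\<in>Ik. indicator (D k) x *\<^sub>R F k) = (F j :: 'v::real_vector)" for F
    using j by (simp add: sum.remove[OF assms(2) j(1)])
  show ?thesis unfolding Ufun_def single[of U] single[of "\<lambda>k. Q (U k)"] ..
next
  case False
  then show ?thesis using assms(3) by (simp add: Ufun_def indicator_def)
qed

subsection \<open>Overlaps of regions under the action\<close>

text \<open>The paper's \<open>p(g) = \<mu>\<^sub>C(E\<^sub>0 \<inter> g\<^sup>-\<^sup>1\<cdot>D\<^sub>0)\<close> is \<open>overlap act MC (D i0) (D i0) g\<close>.\<close>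

definition overlap :: "('g \<Rightarrow> 'c \<Rightarrow> 'c) \<Rightarrow> 'c measure \<Rightarrow> 'c set \<Rightarrow> 'c set \<Rightarrow> 'g \<Rightarrow> real" where
  "overlap act MC A B g = (\<integral>x. indicator A x * indicator B (act g x) \<partial>MC)"

lemma borel_measurable_overlap_indicator:
  fixes act :: "'g::{t2_space, second_countable_topology} \<Rightarrow> 'c::{t2_space, second_countable_topology} \<Rightarrow> 'c"
  assumes G: "compact_group_haar gmul gone ginv MG" and act: "mp_left_action gmul gone act MC"
    and "open A" and "open B"
  shows "(\<lambda>(g, x). indicator A x * indicator B (act g x) :: real) \<in> borel_measurable (MG \<Otimes>\<^sub>M MC)"
proof -
  have "sets MG = sets borel" "sets MC = sets borel"
    using G act by (simp_all add: compact_group_haar_def mp_left_action_def)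
  then have "sets (MG \<Otimes>\<^sub>M MC) = sets (borel :: ('g \<times> 'c) measure)"
    unfolding borel_prod[symmetric] by (rule sets_pair_measure_cong)
  moreover have "open (snd -` A \<inter> (\<lambda>(g, x). act g x) -` B)"
    using act assms(3,4) by (intro open_Int open_vimage_snd open_vimage)
      (auto simp: mp_left_action_def)
  moreover have "(\<lambda>(g, x). indicator A x * indicator B (act g x) :: real)
      = indicator (snd -` A \<inter> (\<lambda>(g, x). act g x) -` B)"
    by (auto simp: indicator_def fun_eq_iff)
  ultimately show ?thesis
    by (metis borel_measurable_indicator borel_open measurable_cong_sets)
qed

lemma borel_measurable_overlap:
  fixes act :: "'g::{t2_space, second_countable_topology} \<Rightarrow> 'c::{t2_space, second_countable_topology} \<Rightarrow> 'c"
  assumes G: "compact_group_haar gmul gone ginv MG" and act: "mp_left_action gmul gone act MC"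
    and "open A" and "open B"
  shows "overlap act MC A B \<in> borel_measurable MG"
proof -
  interpret prob_space MC using act by (simp add: mp_left_action_def)
  show ?thesis
    unfolding overlap_def
    by (rule borel_measurable_lebesgue_integral[OF borel_measurable_overlap_indicator[OF assms]])
qed

lemma overlap_image_act:
  assumes grp: "group gmul gone ginv" and act: "mp_left_action gmul gone act MC"
    and A: "A \<in> sets MC" and B: "B \<in> sets MC"
  shows "overlap act MC (act c ` A) (act h ` B) g = overlap act MC A B (gmul (ginv h) (gmul g c))"
proof -
  have mul: "\<And>g h x. act (gmul g h) x = act g (act h x)" and sp: "space MC = UNIV"
    and "act g \<in> measurable MC MC"
    using act by (auto simp: mp_left_action_def dest: sets_eq_imp_space_eq)
  then have "act g -` act h ` B \<in> sets MC"
    using measurable_sets[of "act g" MC MC] sets_image_act[OF grp act B] by simp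
  then have "(\<lambda>x. indicator (act c ` A) x * indicator (act h ` B) (act g x) :: real)
      \<in> borel_measurable MC"
    using sets_image_act[OF grp act A]
    by (simp flip: indicator_inter_arith indicator_vimage[of "act g"])
  then have "overlap act MC (act c ` A) (act h ` B) g
      = (\<integral>x. indicator (act c ` A) (act c x) * indicator (act h ` B) (act g (act c x)) \<partial>MC)"
    unfolding overlap_def by (rule integral_act_invariant[OF act, symmetric])
  also have "\<dots> = overlap act MC A B (gmul (ginv h) (gmul g c))"
    unfolding overlap_def image_act_eq_vimage[OF grp act] by (simp add: mul indicator_vimage act_inv_act[OF grp act])
  finally show ?thesis .
qed

lemma
  fixes M :: "'g::{t2_space, second_countable_topology} \<Rightarrow> 'b::{banach, second_countable_topology}"
    and act :: "'g \<Rightarrow> 'c::{t2_space, second_countable_topology} \<Rightarrow> 'c"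
  assumes G: "compact_group_haar gmul gone ginv MG" and act: "mp_left_action gmul gone act MC"
    and A: "open A" and B: "open B" and M: "continuous_on UNIV M"
  shows integrable_overlap_weighted:
      "integrable (MG \<Otimes>\<^sub>M MC) (\<lambda>(g, x). (indicator A x * indicator B (act g x)) *\<^sub>R M g)"
    and integral_overlap_weighted:
      "integral\<^sup>L (MG \<Otimes>\<^sub>M MC) (\<lambda>(g, x). (indicator A x * indicator B (act g x)) *\<^sub>R M g)
       = (\<integral>g. overlap act MC A B g *\<^sub>R M g \<partial>MG)"
proof -
  have MG: "prob_space MG" "sets MG = sets borel" "compact (UNIV :: 'g set)"
    using G by (simp_all add: compact_group_haar_def)
  have MC: "prob_space MC" using act by (simp add: mp_left_action_def)
  interpret prob_space "MG \<Otimes>\<^sub>M MC" by (rule prob_space_pair[OF MG(1) MC])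
  interpret pair_sigma_finite MG MC
    using MG(1) MC by (simp add: pair_sigma_finite_def prob_space_imp_sigma_finite)
  obtain K where K: "\<And>g. norm (M g) \<le> K"
    using compact_imp_bounded[OF compact_continuous_image[OF M MG(3)]]
    by (auto simp: bounded_iff)
  have "M \<in> borel_measurable MG"
    using borel_measurable_continuous_onI[OF M] measurable_cong_sets[OF MG(2) refl] by blast
  then have meas: "(\<lambda>(g, x). (indicator A x * indicator B (act g x)) *\<^sub>R M g)
      \<in> borel_measurable (MG \<Otimes>\<^sub>M MC)"
    using borel_measurable_overlap_indicator[OF G act A B] by (simp add: split_beta')
  show int: "integrable (MG \<Otimes>\<^sub>M MC) (\<lambda>(g, x). (indicator A x * indicator B (act g x)) *\<^sub>R M g)"
    by (rule integrable_const_bound[where B=K, OF AE_I2 meas])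
      (auto simp: indicator_def intro: order_trans[OF _ K])
  show "integral\<^sup>L (MG \<Otimes>\<^sub>M MC) (\<lambda>(g, x). (indicator A x * indicator B (act g x)) *\<^sub>R M g)
       = (\<integral>g. overlap act MC A B g *\<^sub>R M g \<partial>MG)"
  proof -
    have "integrable MC (\<lambda>x. indicator A x * indicator B (act g x) :: real)" for g
    proof -
      interpret MC: prob_space MC by (fact MC)
      have "space MG = UNIV" using MG(2) by (simp add: sets_eq_imp_space_eq)
      then show ?thesis
        using measurable_Pair2[OF borel_measurable_overlap_indicator[OF G act A B], of g]
        by (intro MC.integrable_const_bound[where B=1]) (auto simp: indicator_def)
    qed
    then show ?thesis
      using integral_fst[OF int] by (simp add: overlap_def case_prod_beta')
  qed
qed

subsection \<open>The channel of a tight encoding\<close>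

lemma conj_map_translate:
  assumes grp: "group gmul gone ginv" and rep: "unitary_rep gmul \<rho>"
    and a: "cmod a = 1" and b: "cmod b = 1"
  shows "conj_map (cadj (\<rho> g) ** cscale a (\<rho> h ** V ** cadj (\<rho> h)) ** \<rho> g
           ** cadj (cscale b (\<rho> c ** W ** cadj (\<rho> c)))) \<tau>
       = conj_map (\<rho> c ** cadj (\<rho> (gmul (ginv h) (gmul g c))) ** V
           ** \<rho> (gmul (ginv h) (gmul g c)) ** cadj W ** cadj (\<rho> c)) \<tau>"
proof -
  have unit: "\<And>g. \<rho> g ** cadj (\<rho> g) = mat 1"
    using rep by (simp add: unitary_rep_def unitary_mat_def)
  let ?X = "cadj (\<rho> g) ** \<rho> h ** V ** cadj (\<rho> h) ** \<rho> g ** \<rho> c ** cadj W ** cadj (\<rho> c)"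
  have "\<rho> (gmul (ginv h) (gmul g c)) = cadj (\<rho> h) ** \<rho> g ** \<rho> c"
    using rep by (simp add: unitary_rep_def unitary_rep_inv[OF grp rep] matrix_mul_assoc)
  then have "\<rho> c ** cadj (\<rho> (gmul (ginv h) (gmul g c))) ** V
      ** \<rho> (gmul (ginv h) (gmul g c)) ** cadj W ** cadj (\<rho> c) = ?X"
    by (simp add: cadj_mult matrix_mul_assoc unit)
  moreover have "cadj (\<rho> g) ** cscale a (\<rho> h ** V ** cadj (\<rho> h)) ** \<rho> g
      ** cadj (cscale b (\<rho> c ** W ** cadj (\<rho> c))) = cscale (a * cnj b) ?X"
    by (simp add: cadj_mult cadj_cscale cscale_mult_left cscale_mult_right cscale_cscale
        matrix_mul_assoc mult.commute)
  ultimately show ?thesis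
    using a b by (simp add: conj_map_cscale norm_mult)
qed

lemma integral_translated_channel:
  fixes act :: "'g::{t2_space, second_countable_topology} \<Rightarrow> 'c::{t2_space, second_countable_topology} \<Rightarrow> 'c"
  assumes G: "compact_group_haar gmul gone ginv MG" and rep: "unitary_rep gmul \<rho>"
    and act: "mp_left_action gmul gone act MC"
    and A: "open A" and B: "open B" and a: "cmod a = 1" and b: "cmod b = 1"
  shows "integral\<^sup>L (MG \<Otimes>\<^sub>M MC) (\<lambda>(g, x).
           (indicator (act c ` A) x * indicator (act h ` B) (act g x)) *\<^sub>R
           conj_map (cadj (\<rho> g) ** cscale a (\<rho> h ** V ** cadj (\<rho> h)) ** \<rho> g
             ** cadj (cscale b (\<rho> c ** W ** cadj (\<rho> c)))) \<tau>)
       = (\<integral>g. overlap act MC A B g *\<^sub>R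
           conj_map (\<rho> c ** cadj (\<rho> g) ** V ** \<rho> g ** cadj W ** cadj (\<rho> c)) \<tau> \<partial>MG)"
    (is "_ = (\<integral>g. overlap act MC A B g *\<^sub>R ?N g \<partial>MG)")
proof -
  have grp: "group gmul gone ginv" and sMG: "sets MG = sets borel" and sMC: "sets MC = sets borel"
    using G act by (simp_all add: compact_group_haar_def mp_left_action_def)
  have cont: "continuous_on UNIV (\<lambda>g. conj_map (cadj (\<rho> g) ** X ** \<rho> g ** Y) \<tau>)" for X Y
    using rep unfolding unitary_rep_def
    by (intro continuous_on_conj_map continuous_on_matrix_mult continuous_on_cadj continuous_on_const)
      simp_all
  have "continuous_on UNIV ?N"
    using rep unfolding unitary_rep_def
    by (intro continuous_on_conj_map continuous_on_matrix_mult continuous_on_cadj continuous_on_const)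
      simp_all
  then have "?N \<in> borel_measurable MG"
    using borel_measurable_continuous_onI measurable_cong_sets[OF sMG refl] by blast
  then have meas: "(\<lambda>g. overlap act MC A B g *\<^sub>R ?N g) \<in> borel_measurable MG"
    by (intro borel_measurable_scaleR borel_measurable_overlap[OF G act A B])
  have "A \<in> sets MC" "B \<in> sets MC" using A B sMC by auto
  have "integral\<^sup>L (MG \<Otimes>\<^sub>M MC) (\<lambda>(g, x).
           (indicator (act c ` A) x * indicator (act h ` B) (act g x)) *\<^sub>R
           conj_map (cadj (\<rho> g) ** cscale a (\<rho> h ** V ** cadj (\<rho> h)) ** \<rho> g
             ** cadj (cscale b (\<rho> c ** W ** cadj (\<rho> c)))) \<tau>)
      = (\<integral>g. overlap act MC (act c ` A) (act h ` B) g *\<^sub>R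
           conj_map (cadj (\<rho> g) ** cscale a (\<rho> h ** V ** cadj (\<rho> h)) ** \<rho> g
             ** cadj (cscale b (\<rho> c ** W ** cadj (\<rho> c)))) \<tau> \<partial>MG)"
    by (rule integral_overlap_weighted[OF G act open_image_act[OF grp act A]
          open_image_act[OF grp act B] cont])
  also have "\<dots> = (\<integral>g. overlap act MC A B (gmul (ginv h) (gmul g c)) *\<^sub>R
      ?N (gmul (ginv h) (gmul g c)) \<partial>MG)"
    by (simp only: overlap_image_act[OF grp act \<open>A \<in> sets MC\<close> \<open>B \<in> sets MC\<close>]
        conj_map_translate[OF grp rep a b])
  also have "\<dots> = (\<integral>g. overlap act MC A B g *\<^sub>R ?N g \<partial>MG)"
    by (rule integral_haar_translate[OF G meas])
  finally show ?thesis .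
qed

lemma integral_Ufun_channel:
  fixes act :: "'g::{t2_space, second_countable_topology} \<Rightarrow> 'c::{t2_space, second_countable_topology} \<Rightarrow> 'c"
  assumes G: "compact_group_haar gmul gone ginv MG" and rep: "unitary_rep gmul \<rho>"
    and act: "mp_left_action gmul gone act MC"
    and "finite Ik" and "disjoint_family_on D Ik" and D: "\<And>j. j \<in> Ik \<Longrightarrow> open (D j)"
    and A: "open A"
  shows "integral\<^sup>L (MG \<Otimes>\<^sub>M MC) (\<lambda>(g, x).
           indicator A x *\<^sub>R conj_map (cadj (\<rho> g) ** Ufun U Ik D (act g x) ** \<rho> g ** W) \<tau>)
       = (\<Sum>j\<in>Ik. integral\<^sup>L (MG \<Otimes>\<^sub>M MC) (\<lambda>(g, x).
           (indicator A x * indicator (D j) (act g x)) *\<^sub>R conj_map (cadj (\<rho> g) ** U j ** \<rho> g ** W) \<tau>))"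
proof -
  have "indicator A x *\<^sub>R conj_map (cadj (\<rho> g) ** Ufun U Ik D (act g x) ** \<rho> g ** W) \<tau>
      = (\<Sum>j\<in>Ik. (indicator A x * indicator (D j) (act g x)) *\<^sub>R
           conj_map (cadj (\<rho> g) ** U j ** \<rho> g ** W) \<tau>)" for g x
    using map_Ufun[OF assms(5,4), where Q = "\<lambda>X. conj_map (cadj (\<rho> g) ** X ** \<rho> g ** W) \<tau>"]
    by (simp add: conj_map_def scaleR_sum_right)
  then have "(\<lambda>(g, x). indicator A x *\<^sub>R conj_map (cadj (\<rho> g) ** Ufun U Ik D (act g x) ** \<rho> g ** W) \<tau>)
      = (\<lambda>p. \<Sum>j\<in>Ik. (\<lambda>(g, x). (indicator A x * indicator (D j) (act g x)) *\<^sub>R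
           conj_map (cadj (\<rho> g) ** U j ** \<rho> g ** W) \<tau>) p)"
    by auto
  moreover have "continuous_on UNIV (\<lambda>g. conj_map (cadj (\<rho> g) ** U j ** \<rho> g ** W) \<tau>)" for j
    using rep unfolding unitary_rep_def
    by (intro continuous_on_conj_map continuous_on_matrix_mult continuous_on_cadj continuous_on_const)
      simp_all
  ultimately show ?thesis
    by (simp add: Bochner_Integration.integral_sum integrable_overlap_weighted[OF G act A D])
qed

theorem theorem3p12:
  fixes gmul :: "'g::{t2_space,second_countable_topology} \<Rightarrow> 'g \<Rightarrow> 'g"
    and gone :: 'g and ginv :: "'g \<Rightarrow> 'g" and MG :: "'g measure"
    and \<rho> :: "'g \<Rightarrow> complex^'n^'n"
    and U :: "'i::finite \<Rightarrow> complex^'n^'n"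
    and H :: "'g set" and \<sigma> :: "'i \<Rightarrow> 'g \<Rightarrow> 'i" and \<alpha> :: "'i \<Rightarrow> 'g \<Rightarrow> complex"
    and act :: "'g \<Rightarrow> 'c::{t2_space,second_countable_topology} \<Rightarrow> 'c" and MC :: "'c measure"
    and Ik :: "'i set" and i0 :: 'i and D :: "'i \<Rightarrow> 'c set"
    and i :: 'i and c :: 'g and \<tau> :: "complex^'n^'n"
  assumes G: "compact_group_haar gmul gone ginv MG"
    and rep: "unitary_rep gmul \<rho>"
    and ueb: "UEB U"
    and Hsub: "finite_subgroup gmul gone ginv H"
    and equiv: "H_equivariant gmul gone \<rho> H U \<sigma> \<alpha>"
    and act: "mp_left_action gmul gone act MC"
    and orbit: "\<exists>j. Ik = (\<lambda>h. \<sigma> j h) ` H"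
    and zero: "i0 \<in> Ik"
    and enc: "tight_compatible_encoding ginv act MC H \<sigma> Ik D"
    and i: "i \<in> Ik"
    and c: "c \<in> H" "act c ` D i0 = D i"
  shows
   "(1 / measure MC (D i)) *\<^sub>R
      integral\<^sup>L (MG \<Otimes>\<^sub>M MC)
        (\<lambda>(g, x). indicator (D i) x *\<^sub>R
           conj_map (cadj (\<rho> g) ** Ufun U Ik D (act g x) ** \<rho> g ** cadj (U i)) \<tau>)
    = (real (card Ik) / measure MC (D i0)) *\<^sub>R
      conj_map (\<rho> c)
        (integral\<^sup>L MG (\<lambda>g.
           (integral\<^sup>L MC (\<lambda>x. indicator (D i0) x * indicator (D i0) (act g x))) *\<^sub>R
           conj_map (cadj (\<rho> g) ** U i0 ** \<rho> g ** cadj (U i0)) (conj_map (cadj (\<rho> c)) \<tau>)))"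
proof -
  have grp: "group gmul gone ginv" and sMC: "sets MC = sets borel"
    using G act by (simp_all add: compact_group_haar_def mp_left_action_def)
  have D: "\<And>j. j \<in> Ik \<Longrightarrow> open (D j)" "disjoint_family_on D Ik"
    using enc by (simp_all add: tight_compatible_encoding_def)
  have Ik: "Ik = (\<lambda>h. \<sigma> i0 (ginv h)) ` H"
    using orbit orbit_eq_image_inv[OF grp Hsub equiv _ zero] by blast
  define N where "N g = conj_map (\<rho> c ** cadj (\<rho> g) ** U i0 ** \<rho> g ** cadj (U i0) ** cadj (\<rho> c)) \<tau>" for g
  have measure: "measure MC (D i) = measure MC (D i0)"
    using measure_image_act[OF grp act, of "D i0" c] D(1)[OF zero] sMC c(2) by simp
  have rhs: "conj_map (\<rho> c) (\<integral>g. overlap act MC (D i0) (D i0) g *\<^sub>R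
        conj_map (cadj (\<rho> g) ** U i0 ** \<rho> g ** cadj (U i0)) (conj_map (cadj (\<rho> c)) \<tau>) \<partial>MG)
      = (\<integral>g. overlap act MC (D i0) (D i0) g *\<^sub>R N g \<partial>MG)"
    using rep by (simp add: conj_map_integral_unitary unitary_rep_def N_def matrix_mul_assoc)
  show ?thesis
  proof (cases "D i = {}")
    case True
    \<comment> \<open>both prefactors are then \<open>x / 0 = 0\<close>\<close>
    then show ?thesis using measure by simp
  next
    case False
    then have "i = \<sigma> i0 (ginv c)"
      using tight_compatible_encoding_index[OF enc c(1) zero i _ c(2)] Ik c(1) by blast
    then obtain b where b: "cmod b = 1" "U i = cscale b (\<rho> c ** U i0 ** cadj (\<rho> c))"
      using orbit_element_translate[OF grp rep Hsub equiv enc c(1) zero] by metis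
    have summand: "integral\<^sup>L (MG \<Otimes>\<^sub>M MC) (\<lambda>(g, x). (indicator (D i) x * indicator (D j) (act g x))
        *\<^sub>R conj_map (cadj (\<rho> g) ** U j ** \<rho> g ** cadj (U i)) \<tau>)
      = (\<integral>g. overlap act MC (D i0) (D i0) g *\<^sub>R N g \<partial>MG)" if "j \<in> Ik" for j
    proof -
      obtain h where h: "h \<in> H" "j = \<sigma> i0 (ginv h)" using \<open>j \<in> Ik\<close> Ik by blast
      obtain a where a: "cmod a = 1" "D j = act h ` D i0" "U j = cscale a (\<rho> h ** U i0 ** cadj (\<rho> h))"
        using orbit_element_translate[OF grp rep Hsub equiv enc h(1) zero] h(2) by metis
      show ?thesis
        unfolding a(2,3) b(2) N_def c(2)[symmetric]
        by (rule integral_translated_channel[OF G rep act D(1)[OF zero] D(1)[OF zero] a(1) b(1)])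
    qed
    show ?thesis
      unfolding overlap_def[symmetric] rhs measure
      by (simp add: integral_Ufun_channel[OF G rep act finite D(2) D(1) D(1)[OF i]] summand
          sum_constant_scaleR del: sum_constant)
  qed
qed

end
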